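(* Let $q\equiv 3\pmod 4$ be a prime power. Suppose $E_0,E_1,E_2,E_3\subseteq\mathbb{F}_{q^2}$ satisfy $|E_i|=(q^2-q)/2$ for $i=0,1,2,3$, $\{E_0,E_1,E_2,E_3\}$ is a difference family of type $H$ in $(\mathbb{F}_{q^2},+)$, and in $\mathbb{Z}[(\mathbb{F}_{q^2},+)]$ $$E_0E_1^{(-1)}+E_1E_0^{(-1)}+E_2E_3^{(-1)}+E_3E_2^{(-1)}=(q-1)^2\,\mathbb{F}_{q^2}+2D_0-2D_2.$$ In $G=\mathbb{Z}_2\times(\mathbb{F}_{q^2},+)$ put $B_0=(\{0\}\times D_0)\cup(\{1\}\times(\mathbb{F}_{q^2}\setminus D_0))$, $B_1=(\{0\}\times D_2)\cup(\{1\}\times D_2)$, $B_2=(\{0\}\times E_0)\cup(\{1\}\times(\mathbb{F}_{q^2}\setminus E_1))$, $B_3=(\{0\}\times E_2)\cup(\{1\}\times(\mathbb{F}_{q^2}\setminus E_3))$. Then $\{B_0,B_1,B_2,B_3\}$ is a difference family with parameters $(2q^2;q^2,q^2-1,q^2,q^2;2q^2-2)$ in $G$.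
   Context: Let $\omega$ be a primitive element of $\mathbb{F}_{q^2}$, $C_i^{(N,q^2)}=\omega^i\langle\omega^N\rangle$ for $N\mid q^2-1$, and $D_i=C_i^{(4,q^2)}\cup C_{i+1}^{(4,q^2)}$. Subsets $X$ of an abelian group $G$ are identified with $\sum_{x\in X}x\in\mathbb{Z}[G]$, and $X^{(-1)}=\{-x:x\in X\}$. A collection $\{B_1,\dots,B_\ell\}$ of subsets of $G$ with $|B_i|=k_i$ is a difference family with parameters $(|G|;k_1,\dots,k_\ell;\lambda)$ if every nonzero element of $G$ occurs exactly $\lambda$ times among the differences $x-y$, $x,y\in B_i$, $x\ne y$, $i=1,\dots,\ell$; equivalently $\sum_i B_iB_i^{(-1)}=\lambda G+(\sum_i k_i-\lambda)\cdot 0_G$. A difference family with four blocks is of type $H$ if $\sum_{i=1}^4k_i-|G|=\lambda$. *)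

theory Defs
  imports Main "HOL-Library.Numeral_Type" "HOL-Library.Product_Plus" "HOL-Computational_Algebra.Primes"
begin

definition cyc_class :: "'a::field \<Rightarrow> nat \<Rightarrow> nat \<Rightarrow> 'a set" where
  "cyc_class w N i = {w ^ (i + N * j) | j. True}"

definition Dset :: "'a::field \<Rightarrow> nat \<Rightarrow> 'a set" where
  "Dset w i = cyc_class w 4 (i mod 4) \<union> cyc_class w 4 ((i + 1) mod 4)"

definition primitive_elem :: "'a::field \<Rightarrow> bool" where
  "primitive_elem w \<longleftrightarrow> w \<noteq> 0 \<and> (\<forall>x. x \<noteq> 0 \<longrightarrow> (\<exists>n. x = w ^ n))"

definition prime_power :: "nat \<Rightarrow> bool" where
  "prime_power q \<longleftrightarrow> (\<exists>p k. prime p \<and> k > 0 \<and> q = p ^ k)"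

text \<open>Coefficient of g in the group ring product X Y^(-1):
  number of pairs (x,y) in X x Y with x - y = g.\<close>
definition gr_coeff :: "'a::ab_group_add set \<Rightarrow> 'a set \<Rightarrow> 'a \<Rightarrow> nat" where
  "gr_coeff X Y g = card {(x, y). x \<in> X \<and> y \<in> Y \<and> x - y = g}"

definition difference_family :: "'a::{ab_group_add,finite} set list \<Rightarrow> nat \<Rightarrow> bool" where
  "difference_family Bs lam \<longleftrightarrow>
     (\<forall>g. g \<noteq> 0 \<longrightarrow>
        (\<Sum>B\<leftarrow>Bs. card {(x, y). x \<in> B \<and> y \<in> B \<and> x \<noteq> y \<and> x - y = g}) = lam)"

definition difference_family_params ::
  "'a::{ab_group_add,finite} set list \<Rightarrow> nat \<Rightarrow> nat list \<Rightarrow> nat \<Rightarrow> bool" where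
  "difference_family_params Bs v ks lam \<longleftrightarrow>
     CARD('a) = v \<and> length Bs = length ks \<and>
     (\<forall>i < length Bs. card (Bs ! i) = ks ! i) \<and> difference_family Bs lam"

definition type_H :: "'a::{ab_group_add,finite} set list \<Rightarrow> nat \<Rightarrow> bool" where
  "type_H Bs lam \<longleftrightarrow> length Bs = 4 \<and>
     int (\<Sum>B\<leftarrow>Bs. card B) - int CARD('a) = int lam"

end

theory Submission
  imports Defs "HOL-Number_Theory.Residues"
begin

text \<open>
  D_0 and D_2 are unions of two cyclotomic classes of order 4. As 4 divides q + 1, the
  multiplicative group of the subfield F_q, generated by w^(q+1), lies in C_0. Hence, viewing
  F_{q^2} as a plane over F_q, both sets are unions of punctured lines through 0, each made of
  (q + 1)/2 of the q + 1 lines. Counting points line by line in coordinates s g + t a adapted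
  to a nonzero g shows that |D_i \<inter> (D_i + g)| is (q^2 - 5)/4 or (q^2 - 1)/4 according as g
  lies in D_i or not.

  The differences of the blocks in Z_2 \<times> F_{q^2} are counted layer by layer: a difference (0, z)
  arises from the products X X^(-1) of the two layers of each block, a difference (1, z) from
  the mixed products X Y^(-1), and complements turn both into known quantities. With the counts
  for D_0 and D_2, the type H condition on the E_i and the prescribed mixed products of the E_i,
  both come to 2q^2 - 2.
\<close>

lemma card_Compl:
  fixes A :: "'a::finite set"
  shows "card (- A) = CARD('a) - card A"
  by (simp add: Compl_eq_Diff_UNIV card_Diff_subset)

lemma card_Collect_bij_betw_Times:
  assumes "bij_betw (\<lambda>(s, t). F s t) (A \<times> B) UNIV"
  shows "card {x. P x} = card {(s, t) \<in> A \<times> B. P (F s t)}"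
proof -
  have "{x. P x} = (\<lambda>(s, t). F s t) ` {(s, t) \<in> A \<times> B. P (F s t)}"
  proof (intro equalityI subsetI)
    fix x assume "x \<in> {x. P x}"
    moreover obtain p where "p \<in> A \<times> B" "x = (\<lambda>(s, t). F s t) p"
      using assms unfolding bij_betw_def by (metis UNIV_I imageE)
    ultimately show "x \<in> (\<lambda>(s, t). F s t) ` {(s, t) \<in> A \<times> B. P (F s t)}" by auto
  qed auto
  moreover have "inj_on (\<lambda>(s, t). F s t) {(s, t) \<in> A \<times> B. P (F s t)}"
    using assms by (auto simp: bij_betw_def intro: inj_on_subset)
  ultimately show ?thesis by (simp add: card_image)
qed

lemma card_Times_split:
  assumes "finite A" "finite B" "b \<in> B"
  shows "card {(x, y) \<in> A \<times> B. P x y}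
    = card {x \<in> A. P x b} + card {(x, y) \<in> A \<times> (B - {b}). P x y}"
proof -
  have "{(x, y) \<in> A \<times> B. P x y}
      = (\<lambda>x. (x, b)) ` {x \<in> A. P x b} \<union> {(x, y) \<in> A \<times> (B - {b}). P x y}"
    using assms(3) by auto
  moreover have "card ((\<lambda>x. (x, b)) ` {x \<in> A. P x b}) = card {x \<in> A. P x b}"
    by (rule card_image) (auto intro: inj_onI)
  moreover have "finite {(x, y) \<in> A \<times> (B - {b}). P x y}"
    using assms(1,2) by (auto intro: rev_finite_subset[of "A \<times> B"])
  moreover have "(\<lambda>x. (x, b)) ` {x \<in> A. P x b} \<inter> {(x, y) \<in> A \<times> (B - {b}). P x y} = {}"
    by auto
  ultimately show ?thesis using assms(1) by (simp add: card_Un_disjoint)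
qed

lemma card_off_diagonal:
  assumes "finite S"
  shows "card {(u, v) \<in> S \<times> S. u \<noteq> v} = card S * (card S - 1)"
proof -
  have "{(u, v) \<in> S \<times> S. u \<noteq> v} = S \<times> S - (\<lambda>u. (u, u)) ` S" by auto
  moreover have "card ((\<lambda>u. (u, u)) ` S) = card S" by (rule card_image) (auto intro: inj_onI)
  ultimately show ?thesis using assms
    by (simp add: card_Diff_subset card_cartesian_product image_subset_iff diff_mult_distrib2)
qed

lemma card_multiples_below:
  fixes k m :: nat
  assumes "k > 0"
  shows "card {n \<in> {..<k * m}. k dvd n} = m"
proof -
  have "{n \<in> {..<k * m}. k dvd n} = (\<lambda>j. k * j) ` {..<m}"
  proof (intro equalityI subsetI)
    fix n assume "n \<in> {n \<in> {..<k * m}. k dvd n}"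
    then obtain j where j: "n = k * j" and lt: "k * j < k * m" by (auto elim!: dvdE)
    from lt have "j < m" by (rule mult_left_less_imp_less) simp
    thus "n \<in> (\<lambda>j. k * j) ` {..<m}" using j by blast
  qed (use assms in auto)
  thus ?thesis using assms by (simp add: card_image inj_on_mult)
qed

lemma prime_power_ge_2:
  assumes "prime_power q"
  shows "2 \<le> q"
proof -
  obtain p k where "prime p" "k > 0" "q = p ^ k" using assms by (auto simp: prime_power_def)
  moreover from this have "p \<le> p ^ k" using prime_gt_1_nat[of p] by (simp add: self_le_power)
  ultimately show ?thesis using prime_ge_2_nat[of p] by linarith
qed

lemma nonzero_power_card_minus_one:
  fixes x :: "'a::{field,finite}"
  assumes "x \<noteq> 0"
  shows "x ^ (CARD('a) - 1) = 1"
proof -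
  have "(\<Prod>y\<in>UNIV - {0}. x * y) = (\<Prod>y\<in>UNIV - {0::'a}. y)"
    by (rule prod.reindex_bij_witness[of _ "\<lambda>y. y / x" "\<lambda>y. x * y"]) (use assms in auto)
  moreover have "(\<Prod>y\<in>UNIV - {0}. x * y) = x ^ (CARD('a) - 1) * (\<Prod>y\<in>UNIV - {0::'a}. y)"
    by (simp add: prod.distrib card_Diff_singleton)
  moreover have "(\<Prod>y\<in>UNIV - {0::'a}. y) \<noteq> 0" by simp
  ultimately show ?thesis by simp
qed

lemma primitive_elem_power_eq_iff:
  fixes w :: "'a::{field,finite}"
  assumes "primitive_elem w"
  shows "w ^ a = w ^ b \<longleftrightarrow> a mod (CARD('a) - 1) = b mod (CARD('a) - 1)"
proof -
  define N where "N = CARD('a) - 1"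
  have w0: "w \<noteq> 0" using assms by (simp add: primitive_elem_def)
  have "card {0, 1::'a} \<le> CARD('a)" by (rule card_mono) auto
  hence "N > 0" by (simp add: N_def)
  have "w ^ N = 1" unfolding N_def by (rule nonzero_power_card_minus_one[OF w0])
  have reduce: "w ^ n = w ^ (n mod N)" for n
  proof -
    have "w ^ n = w ^ (N * (n div N) + n mod N)" by simp
    also have "\<dots> = (w ^ N) ^ (n div N) * w ^ (n mod N)" by (simp only: power_add power_mult)
    finally show ?thesis using \<open>w ^ N = 1\<close> by simp
  qed
  have "(\<lambda>n. w ^ n) ` {..<N} = UNIV - {0}"
  proof
    show "UNIV - {0} \<subseteq> (\<lambda>n. w ^ n) ` {..<N}"
    proof
      fix x :: 'a assume "x \<in> UNIV - {0}"
      then obtain n where "x = w ^ n" using assms by (auto simp: primitive_elem_def)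
      hence "x = w ^ (n mod N)" using reduce[of n] by simp
      thus "x \<in> (\<lambda>n. w ^ n) ` {..<N}" using \<open>N > 0\<close> by auto
    qed
  qed (use w0 in auto)
  moreover have "card (UNIV - {0::'a}) = card {..<N}" by (simp add: N_def card_Diff_singleton)
  ultimately have "inj_on (\<lambda>n. w ^ n) {..<N}" by (simp add: eq_card_imp_inj_on)
  hence "w ^ (a mod N) = w ^ (b mod N) \<longleftrightarrow> a mod N = b mod N"
    using \<open>N > 0\<close> by (auto dest: inj_onD)
  thus ?thesis using reduce[of a] reduce[of b] by (simp add: N_def)
qed

context
  fixes w :: "'a::{field,finite}"
  assumes primitive: "primitive_elem w" and four_dvd_order: "4 dvd CARD('a) - 1"
begin

lemma power_mem_cyc_class_iff:
  assumes "i < 4"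
  shows "w ^ n \<in> cyc_class w 4 i \<longleftrightarrow> n mod 4 = i"
proof
  assume "w ^ n \<in> cyc_class w 4 i"
  then obtain j where "w ^ n = w ^ (i + 4 * j)" by (auto simp: cyc_class_def)
  hence "n mod (CARD('a) - 1) mod 4 = (i + 4 * j) mod (CARD('a) - 1) mod 4"
    by (simp add: primitive_elem_power_eq_iff[OF primitive])
  thus "n mod 4 = i" using four_dvd_order assms by (simp add: mod_mod_cancel)
next
  assume "n mod 4 = i"
  hence "n = i + 4 * (n div 4)" by presburger
  thus "w ^ n \<in> cyc_class w 4 i" unfolding cyc_class_def by (metis (mono_tags) mem_Collect_eq)
qed

lemma power_mem_Dset_iff: "w ^ n \<in> Dset w i \<longleftrightarrow> n mod 4 = i mod 4 \<or> n mod 4 = (i + 1) mod 4"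
  by (simp add: Dset_def power_mem_cyc_class_iff)

lemma zero_notin_Dset: "0 \<notin> Dset w i"
  using primitive by (auto simp: Dset_def cyc_class_def primitive_elem_def)

lemma nonzero_eq_power: "x \<noteq> 0 \<Longrightarrow> \<exists>n. x = w ^ n"
  using primitive by (simp add: primitive_elem_def)

lemma mult_power_mem_Dset_iff: "w ^ m * x \<in> Dset w (i + m) \<longleftrightarrow> x \<in> Dset w i"
proof (cases "x = 0")
  case False
  then obtain n where "x = w ^ n" using nonzero_eq_power by blast
  have "w ^ m * x = w ^ (m + n)" using \<open>x = w ^ n\<close> by (simp add: power_add)
  moreover have cancel: "(m + n) mod 4 = (k + m) mod 4 \<longleftrightarrow> n mod 4 = k mod 4" for k
    using cong_add_lcancel_nat[of m n k 4] by (simp add: cong_def add.commute)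
  ultimately show ?thesis
    using \<open>x = w ^ n\<close> cancel[of i] cancel[of "i + 1"] by (simp add: power_mem_Dset_iff)
qed (simp add: zero_notin_Dset)

lemma Dset_2_eq: "Dset w 2 = - insert 0 (Dset w 0)"
proof -
  have "x \<in> Dset w 2 \<longleftrightarrow> x \<noteq> 0 \<and> x \<notin> Dset w 0" for x
  proof (cases "x = 0")
    case False
    then obtain n where "x = w ^ n" using nonzero_eq_power by blast
    thus ?thesis using False by (simp add: power_mem_Dset_iff) presburger
  qed (simp add: zero_notin_Dset)
  thus ?thesis by blast
qed

lemma card_Dset: "2 * card (Dset w 0) = CARD('a) - 1" "2 * card (Dset w 2) = CARD('a) - 1"
proof -
  have w0: "w ^ 2 \<noteq> 0" using primitive by (simp add: primitive_elem_def)
  have "Dset w 2 = (\<lambda>x. w ^ 2 * x) ` Dset w 0"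
  proof (intro equalityI subsetI)
    fix y assume "y \<in> Dset w 2"
    moreover have "y = w ^ 2 * (y / w ^ 2)" using w0 by simp
    ultimately have "y / w ^ 2 \<in> Dset w 0"
      using mult_power_mem_Dset_iff[of 2 "y / w ^ 2" 0] by (simp only: add_0)
    with \<open>y = w ^ 2 * (y / w ^ 2)\<close> show "y \<in> (\<lambda>x. w ^ 2 * x) ` Dset w 0" by blast
  qed (use mult_power_mem_Dset_iff[of 2 _ 0, unfolded add_0] in blast)
  moreover have "inj_on ((*) (w ^ 2)) (Dset w 0)" using w0 by (auto intro: inj_onI)
  ultimately have same: "card (Dset w 2) = card (Dset w 0)" by (simp add: card_image)
  have "card (Dset w 2) = CARD('a) - card (insert 0 (Dset w 0))"
    unfolding Dset_2_eq by (simp add: card_Compl)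
  also have "\<dots> = CARD('a) - 1 - card (Dset w 0)" by (simp add: zero_notin_Dset)
  finally show "2 * card (Dset w 0) = CARD('a) - 1" "2 * card (Dset w 2) = CARD('a) - 1"
    using same by simp_all
qed

end

lemma gr_coeff_eq_card: "gr_coeff X Y z = card {x \<in> X. x - z \<in> Y}"
  unfolding gr_coeff_def
  by (rule bij_betw_same_card[of fst]) (auto intro!: bij_betw_byWitness[where f' = "\<lambda>x. (x, x - z)"])

lemma gr_coeff_eq_card_right: "gr_coeff X Y z = card {y \<in> Y. y + z \<in> X}"
  unfolding gr_coeff_def
  by (rule bij_betw_same_card[of snd]) (auto intro!: bij_betw_byWitness[where f' = "\<lambda>y. (y + z, y)"])

lemma gr_coeff_Compl_left:
  fixes X Y :: "'a::{ab_group_add,finite} set"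
  shows "int (gr_coeff (- X) Y z) = int (card Y) - int (gr_coeff X Y z)"
proof -
  have "{y \<in> Y. y + z \<in> - X} = Y - {y \<in> Y. y + z \<in> X}" by auto
  thus ?thesis unfolding gr_coeff_eq_card_right by (simp add: card_Diff_subset of_nat_diff card_mono)
qed

lemma gr_coeff_Compl_right:
  fixes X Y :: "'a::{ab_group_add,finite} set"
  shows "int (gr_coeff X (- Y) z) = int (card X) - int (gr_coeff X Y z)"
proof -
  have "{x \<in> X. x - z \<in> - Y} = X - {x \<in> X. x - z \<in> Y}" by auto
  thus ?thesis unfolding gr_coeff_eq_card by (simp add: card_Diff_subset of_nat_diff card_mono)
qed

lemma gr_coeff_Compl_Compl:
  fixes X :: "'a::{ab_group_add,finite} set"
  shows "int (gr_coeff (- X) (- X) z) = int CARD('a) - 2 * int (card X) + int (gr_coeff X X z)"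
  using gr_coeff_Compl_left[of X "- X" z] gr_coeff_Compl_right[of X X z] card_Compl[of X]
  by (simp add: of_nat_diff card_mono)

lemma gr_coeff_self_zero: "gr_coeff X X 0 = card X"
  by (simp add: gr_coeff_eq_card)

lemma card_nonzero_differences:
  "z \<noteq> 0 \<Longrightarrow> card {(x, y). x \<in> X \<and> y \<in> X \<and> x \<noteq> y \<and> x - y = z} = gr_coeff X X z"
  unfolding gr_coeff_def by (rule arg_cong[where f = card]) auto

locale quadratic_subfield =
  fixes K :: "'a::{field,finite} set" and q :: nat
  assumes one_mem: "1 \<in> K"
    and diff_mem: "x \<in> K \<Longrightarrow> y \<in> K \<Longrightarrow> x - y \<in> K"
    and mult_mem: "x \<in> K \<Longrightarrow> y \<in> K \<Longrightarrow> x * y \<in> K"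
    and divide_mem: "x \<in> K \<Longrightarrow> y \<in> K \<Longrightarrow> x / y \<in> K"
    and card_subfield: "card K = q"
    and card_field: "CARD('a) = q ^ 2"
begin

lemma zero_mem: "0 \<in> K"
  using diff_mem[OF one_mem one_mem] by simp

lemma two_le_q: "2 \<le> q"
proof -
  have "card {0, 1::'a} \<le> card K" using zero_mem one_mem by (intro card_mono) auto
  thus ?thesis by (simp add: card_subfield)
qed

text \<open>Viewing the field as a plane over \<open>K\<close>, a cone is a union of punctured lines through 0.\<close>

definition cone :: "'a set \<Rightarrow> bool" where
  "cone D \<longleftrightarrow> 0 \<notin> D \<and> (\<forall>t \<in> K. \<forall>x \<in> D. t \<noteq> 0 \<longrightarrow> t * x \<in> D)"

lemma cone_mult_iff:
  assumes "cone D" "t \<in> K" "t \<noteq> 0"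
  shows "t * x \<in> D \<longleftrightarrow> x \<in> D"
proof
  assume "t * x \<in> D"
  moreover have "1 / t \<in> K" "1 / t \<noteq> 0" using assms(2,3) one_mem divide_mem by auto
  ultimately have "(1 / t) * (t * x) \<in> D" using assms(1) unfolding cone_def by blast
  thus "x \<in> D" using assms(3) by simp
qed (use assms in \<open>simp add: cone_def\<close>)

lemma cone_multiple_mem_iff:
  assumes "cone D" "s \<in> K"
  shows "s * g \<in> D \<longleftrightarrow> s \<noteq> 0 \<and> g \<in> D"
  using assms cone_mult_iff[OF assms(1)] by (cases "s = 0") (auto simp: cone_def)

lemma obtain_basis:
  assumes "g \<noteq> 0"
  obtains a where "bij_betw (\<lambda>(s, t). s * g + t * a) (K \<times> K) UNIV"
proof -
  have "q < q ^ 2" using two_le_q by (simp add: power2_eq_square)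
  hence "card ((\<lambda>t. t * g) ` K) < CARD('a)"
    using card_image_le[of K "\<lambda>t. t * g"] card_subfield card_field by simp
  then obtain a where a: "a \<notin> (\<lambda>t. t * g) ` K" by (metis UNIV_I card_mono finite leD subsetI)
  have "inj_on (\<lambda>(s, t). s * g + t * a) (K \<times> K)"
  proof (rule inj_onI, clarsimp)
    fix s t s' t' assume K: "s \<in> K" "t \<in> K" "s' \<in> K" "t' \<in> K"
      and "s * g + t * a = s' * g + t' * a"
    hence eq: "(s - s') * g = (t' - t) * a" by (simp add: algebra_simps)
    show "s = s' \<and> t = t'"
    proof (cases "t = t'")
      case False
      hence "a = ((s - s') / (t' - t)) * g" using eq by (simp add: field_simps)
      moreover have "(s - s') / (t' - t) \<in> K" using K by (intro divide_mem diff_mem)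
      ultimately show ?thesis using a by blast
    qed (use eq assms in simp)
  qed
  moreover from this have "(\<lambda>(s, t). s * g + t * a) ` (K \<times> K) = UNIV"
    by (intro card_eq_UNIV_imp_eq_UNIV)
       (simp_all add: card_image card_cartesian_product card_subfield card_field power2_eq_square)
  ultimately show ?thesis using that by (simp add: bij_betw_def)
qed

text \<open>
  Each line through 0 other than \<open>K g\<close> meets the affine line \<open>a + K g\<close> in exactly one point
  \<open>u g + a\<close>; \<open>slopes g a D\<close> records the lines of the cone \<open>D\<close> in this way.
\<close>

definition slopes :: "'a \<Rightarrow> 'a \<Rightarrow> 'a set \<Rightarrow> 'a set" where
  "slopes g a D = {u \<in> K. u * g + a \<in> D}"

lemma mem_cone_iff_slope:
  assumes "cone D" "s \<in> K" "t \<in> K" "t \<noteq> 0"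
  shows "s * g + t * a \<in> D \<longleftrightarrow> s / t \<in> slopes g a D"
proof -
  have "s * g + t * a = t * ((s / t) * g + a)" using assms(4) by (simp add: field_simps)
  thus ?thesis using assms divide_mem cone_mult_iff by (simp add: slopes_def)
qed

lemma card_cone:
  assumes D: "cone D" and basis: "bij_betw (\<lambda>(s, t). s * g + t * a) (K \<times> K) UNIV"
  shows "card D = ((if g \<in> D then 1 else 0) + card (slopes g a D)) * (q - 1)"
proof -
  have "card D = card {(s, t) \<in> K \<times> K. s * g + t * a \<in> D}"
    using card_Collect_bij_betw_Times[OF basis, of "\<lambda>x. x \<in> D"] by simp
  also have "\<dots> = card {s \<in> K. s * g \<in> D} + card {(s, t) \<in> K \<times> (K - {0}). s * g + t * a \<in> D}"
    using card_Times_split[where P = "\<lambda>s t. s * g + t * a \<in> D", OF _ _ zero_mem] by simp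
  also have "{s \<in> K. s * g \<in> D} = (if g \<in> D then K - {0} else {})"
    using cone_multiple_mem_iff[OF D] by auto
  also have "card {(s, t) \<in> K \<times> (K - {0}). s * g + t * a \<in> D} = card (slopes g a D \<times> (K - {0}))"
  proof (rule bij_betw_same_card[of "\<lambda>(s, t). (s / t, t)"],
         rule bij_betw_byWitness[where f' = "\<lambda>(u, t). (u * t, t)"])
    show "(\<lambda>(s, t). (s / t, t)) ` {(s, t) \<in> K \<times> (K - {0}). s * g + t * a \<in> D}
        \<subseteq> slopes g a D \<times> (K - {0})"
      using mem_cone_iff_slope[OF D] by auto
    show "(\<lambda>(u, t). (u * t, t)) ` (slopes g a D \<times> (K - {0}))
        \<subseteq> {(s, t) \<in> K \<times> (K - {0}). s * g + t * a \<in> D}"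
      using mem_cone_iff_slope[OF D] mult_mem by (auto simp: slopes_def)
  qed auto
  finally show ?thesis using card_subfield zero_mem by (simp add: card_cartesian_product)
qed

lemma card_cone_translate_off_axis:
  assumes D: "cone D"
  shows "card {(s, t) \<in> K \<times> (K - {0}). s * g + t * a \<in> D \<and> (s - 1) * g + t * a \<in> D}
    = card {(u, v) \<in> slopes g a D \<times> slopes g a D. u \<noteq> v}"
    (is "card ?T = card ?P")
proof (rule bij_betw_same_card[of "\<lambda>(s, t). (s / t, (s - 1) / t)"],
       rule bij_betw_byWitness[where f' = "\<lambda>(u, v). (u / (u - v), 1 / (u - v))"])
  show "(\<lambda>(s, t). (s / t, (s - 1) / t)) ` ?T \<subseteq> ?P"
    using mem_cone_iff_slope[OF D] diff_mem[OF _ one_mem] by (auto simp: divide_cancel_right)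
  show "(\<lambda>(u, v). (u / (u - v), 1 / (u - v))) ` ?P \<subseteq> ?T"
  proof
    fix p assume "p \<in> (\<lambda>(u, v). (u / (u - v), 1 / (u - v))) ` ?P"
    then obtain u v where p: "p = (u / (u - v), 1 / (u - v))"
      and uv: "u \<in> slopes g a D" "v \<in> slopes g a D" "u \<noteq> v"
      by auto
    from uv have K: "u / (u - v) \<in> K" "1 / (u - v) \<in> K" "u / (u - v) - 1 \<in> K"
      using one_mem by (auto simp: slopes_def intro!: divide_mem diff_mem)
    have t0: "1 / (u - v) \<noteq> 0" using uv(3) by simp
    have e: "u / (u - v) / (1 / (u - v)) = u" "(u / (u - v) - 1) / (1 / (u - v)) = v"
      using uv(3) by (simp_all add: field_simps)
    have "u / (u - v) * g + 1 / (u - v) * a \<in> D"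
      by (subst mem_cone_iff_slope[OF D K(1,2) t0]) (simp only: e uv(1))
    moreover have "(u / (u - v) - 1) * g + 1 / (u - v) * a \<in> D"
      by (subst mem_cone_iff_slope[OF D K(3,2) t0]) (simp only: e uv(2))
    ultimately show "p \<in> ?T" using p K t0 by simp
  qed
  show "\<forall>p \<in> ?P. (\<lambda>(s, t). (s / t, (s - 1) / t)) ((\<lambda>(u, v). (u / (u - v), 1 / (u - v))) p) = p"
    by (auto simp: diff_divide_distrib)
qed (auto simp: field_simps)

lemma card_cone_inter_translate:
  assumes D: "cone D" and basis: "bij_betw (\<lambda>(s, t). s * g + t * a) (K \<times> K) UNIV"
  shows "card {x \<in> D. x - g \<in> D}
    = (if g \<in> D then q - 2 else 0) + card (slopes g a D) * (card (slopes g a D) - 1)"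
proof -
  have shift: "s * g + t * a - g = (s - 1) * g + t * a" for s t by (simp add: algebra_simps)
  have "card {x \<in> D. x - g \<in> D}
      = card {(s, t) \<in> K \<times> K. s * g + t * a \<in> D \<and> (s - 1) * g + t * a \<in> D}"
    using card_Collect_bij_betw_Times[OF basis, of "\<lambda>x. x \<in> D \<and> x - g \<in> D"]
    by (simp add: shift)
  also have "\<dots> = card {s \<in> K. s * g \<in> D \<and> (s - 1) * g \<in> D}
      + card {(s, t) \<in> K \<times> (K - {0}). s * g + t * a \<in> D \<and> (s - 1) * g + t * a \<in> D}"
    using card_Times_split[where P = "\<lambda>s t. s * g + t * a \<in> D \<and> (s - 1) * g + t * a \<in> D",
        OF _ _ zero_mem] by simp
  also have "{s \<in> K. s * g \<in> D \<and> (s - 1) * g \<in> D} = (if g \<in> D then K - {0, 1} else {})"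
    using cone_multiple_mem_iff[OF D] diff_mem[OF _ one_mem] D by (auto simp: cone_def)
  also note card_cone_translate_off_axis[OF D]
  also have "card {(u, v) \<in> slopes g a D \<times> slopes g a D. u \<noteq> v}
      = card (slopes g a D) * (card (slopes g a D) - 1)"
    by (rule card_off_diagonal) simp
  finally show ?thesis
    using card_subfield zero_mem one_mem by (simp add: card_Diff_subset numeral_2_eq_2)
qed

lemma half_cone_difference_count:
  assumes D: "cone D" and card_D: "2 * card D = q ^ 2 - 1" and "g \<noteq> 0"
  shows "4 * gr_coeff D D g + (if g \<in> D then 5 else 1) = q ^ 2"
proof -
  obtain a where basis: "bij_betw (\<lambda>(s, t). s * g + t * a) (K \<times> K) UNIV"
    using obtain_basis[OF \<open>g \<noteq> 0\<close>] .
  define r where "r = card (slopes g a D)"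
  have pairs: "gr_coeff D D g = (if g \<in> D then q - 2 else 0) + r * (r - 1)"
    using card_cone_inter_translate[OF D basis] by (simp add: gr_coeff_eq_card r_def)
  obtain p where q: "q = Suc (Suc p)" using two_le_q by (metis add_2_eq_Suc le_Suc_ex)
  have "(q - 1) * (2 * ((if g \<in> D then 1 else 0) + r)) = 2 * card D"
    unfolding card_cone[OF D basis] r_def by (simp only: ac_simps)
  also have "\<dots> = (q - 1) * (q + 1)" unfolding card_D q by (simp add: power2_eq_square)
  finally have lines: "2 * ((if g \<in> D then 1 else 0) + r) = q + 1"
    unfolding q by (simp only: mult_left_cancel diff_Suc_1 Suc_neq_Zero not_False_eq_True)
  show ?thesis
  proof (cases "g \<in> D")
    case True
    with lines have "\<exists>m. p = 2 * m + 1 \<and> r = m + 1" unfolding q by presburger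
    then obtain m where "p = 2 * m + 1" "r = m + 1" by blast
    thus ?thesis using True pairs unfolding q by (simp add: algebra_simps power2_eq_square)
  next
    case False
    with lines have "\<exists>m. p = 2 * m + 1 \<and> r = m + 2" unfolding q by presburger
    then obtain m where "p = 2 * m + 1" "r = m + 2" by blast
    thus ?thesis using False pairs unfolding q by (simp add: algebra_simps power2_eq_square)
  qed
qed

end

locale primitive_quadratic_field =
  fixes w :: "'a::{field,finite}" and q :: nat
  assumes prime_power: "prime_power q" and card_field: "CARD('a) = q ^ 2"
    and primitive: "primitive_elem w"
begin

definition Fq :: "'a set" where
  "Fq = {x. x ^ q = x}"

lemma two_le_q: "2 \<le> q"
  using prime_power by (rule prime_power_ge_2)

lemma power_q_add: "(x + y :: 'a) ^ q = x ^ q + y ^ q"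
proof -
  obtain p k where p: "prime p" and q: "q = p ^ k" and "k > 0"
    using prime_power by (auto simp: prime_power_def)
  have char: "prime CHAR('a)"
    by (rule prime_CHAR_semidom) (simp add: finite_imp_CHAR_pos)
  have "CHAR('a) dvd CARD('a)" by (rule CHAR_dvd_CARD)
  also have "CARD('a) = p ^ (k * 2)" using card_field q by (simp add: power_mult)
  finally have "CHAR('a) dvd p" using char prime_dvd_power by blast
  hence "CHAR('a) = p" using char p primes_dvd_imp_eq by blast
  thus ?thesis using freshmans_dream'[OF char, of q k] q by simp
qed

lemma power_q_diff: "(x - y :: 'a) ^ q = x ^ q - y ^ q"
  using power_q_add[of "x - y" y] by (simp add: algebra_simps)

lemma power_mem_Fq_iff: "w ^ n \<in> Fq \<longleftrightarrow> (q + 1) dvd n"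
proof -
  have N: "CARD('a) - 1 = (q - 1) * (q + 1)"
    using two_le_q by (simp add: card_field power2_eq_square algebra_simps)
  have "w ^ n \<in> Fq \<longleftrightarrow> (n * q) mod (CARD('a) - 1) = n mod (CARD('a) - 1)"
    by (simp add: Fq_def primitive_elem_power_eq_iff[OF primitive] flip: power_mult)
  also have "\<dots> \<longleftrightarrow> CARD('a) - 1 dvd n * q - n"
    using two_le_q by (intro mod_eq_dvd_iff_nat) simp
  also have "n * q - n = (q - 1) * n" by (simp add: diff_mult_distrib2 mult.commute)
  also have "CARD('a) - 1 dvd (q - 1) * n \<longleftrightarrow> (q - 1) * (q + 1) dvd (q - 1) * n"
    by (simp only: N)
  also have "\<dots> \<longleftrightarrow> (q + 1) dvd n"
    by (rule nat_mult_dvd_cancel1) (use two_le_q in simp)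
  finally show ?thesis .
qed

lemma card_Fq: "card Fq = q"
proof -
  define N where "N = CARD('a) - 1"
  have N: "N = (q + 1) * (q - 1)"
    using two_le_q by (simp add: N_def card_field power2_eq_square algebra_simps)
  have w0: "w \<noteq> 0" using primitive by (simp add: primitive_elem_def)
  have inj: "inj_on (\<lambda>n. w ^ n) {..<N}"
    unfolding N_def by (rule inj_onI) (simp add: primitive_elem_power_eq_iff[OF primitive])
  have "Fq - {0} = (\<lambda>n. w ^ n) ` {n \<in> {..<N}. (q + 1) dvd n}"
  proof (intro equalityI subsetI)
    fix x assume x: "x \<in> Fq - {0}"
    then obtain n where "x = w ^ n" using primitive by (auto simp: primitive_elem_def)
    moreover have "w ^ n = w ^ (n mod N)"
      unfolding N_def by (simp add: primitive_elem_power_eq_iff[OF primitive])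
    moreover have "(q + 1) dvd n" using x \<open>x = w ^ n\<close> power_mem_Fq_iff by simp
    hence "(q + 1) dvd n mod N" unfolding N by (rule dvd_mod[OF _ dvd_triv_left])
    moreover have "n mod N < N" using two_le_q N by simp
    ultimately show "x \<in> (\<lambda>n. w ^ n) ` {n \<in> {..<N}. (q + 1) dvd n}" by auto
  qed (use w0 power_mem_Fq_iff in auto)
  moreover have "inj_on (\<lambda>n. w ^ n) {n \<in> {..<N}. (q + 1) dvd n}"
    using inj by (rule inj_on_subset) auto
  ultimately have "card (Fq - {0}) = card {n \<in> {..<N}. (q + 1) dvd n}"
    by (simp add: card_image)
  also have "\<dots> = q - 1" unfolding N by (rule card_multiples_below) simp
  finally show ?thesis
    using two_le_q by (simp add: card_Diff_singleton_if Fq_def split: if_splits)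
qed

sublocale quadratic_subfield Fq q
proof
  fix x y assume "x \<in> Fq" "y \<in> Fq"
  thus "x - y \<in> Fq" "x * y \<in> Fq" "x / y \<in> Fq"
    by (simp_all add: Fq_def power_q_diff power_mult_distrib power_divide)
next
  show "card Fq = q" by (rule card_Fq)
qed (simp_all add: Fq_def card_field)

lemma four_dvd_card_minus_one:
  assumes "q mod 4 = 3"
  shows "4 dvd CARD('a) - 1"
proof -
  have "4 dvd (q - 1) * (q + 1)" using assms by (intro dvd_mult) presburger
  moreover have "CARD('a) - 1 = (q - 1) * (q + 1)"
    using two_le_q by (simp add: card_field power2_eq_square algebra_simps)
  ultimately show ?thesis by (simp only:)
qed

text \<open>The nonzero elements of \<open>Fq\<close> are powers of w^(q+1), and 4 divides q + 1.\<close>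

lemma cone_Dset:
  assumes "q mod 4 = 3"
  shows "cone (Dset w i)"
proof -
  note four = four_dvd_card_minus_one[OF assms]
  have "t * x \<in> Dset w i" if t: "t \<in> Fq" "t \<noteq> 0" and x: "x \<in> Dset w i" for t x
  proof -
    obtain m where m: "t = w ^ m" using t(2) primitive by (auto simp: primitive_elem_def)
    moreover have "4 dvd q + 1" using assms by presburger
    ultimately have "4 dvd m" using t(1) power_mem_Fq_iff dvd_trans by blast
    hence "(i + m) mod 4 = i mod 4" "(i + m + 1) mod 4 = (i + 1) mod 4" by presburger+
    hence "Dset w (i + m) = Dset w i" unfolding Dset_def by (simp only:)
    thus ?thesis using mult_power_mem_Dset_iff[OF primitive four, of m x i] x m by simp
  qed
  thus ?thesis using zero_notin_Dset[OF primitive four] by (simp add: cone_def)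
qed

end

lemma two_cases: "(x :: 2) = 0 \<or> x = 1"
proof (rule bit0_cases[of x])
  fix z assume z: "x = of_int z" "0 \<le> z" "z < int CARD(num1 bit0)"
  hence "z = 0 \<or> z = 1" by auto
  thus ?thesis using z(1) by auto
qed

definition stacked :: "'a set \<Rightarrow> 'a set \<Rightarrow> (2 \<times> 'a) set" where
  "stacked X Y = {(0, x) | x. x \<in> X} \<union> {(1, y) | y. y \<in> Y}"

lemma card_stacked:
  fixes X Y :: "'a::finite set"
  shows "card (stacked X Y) = card X + card Y"
proof -
  have "stacked X Y = Pair 0 ` X \<union> Pair 1 ` Y" by (auto simp: stacked_def)
  moreover have "Pair (0::2) ` X \<inter> Pair 1 ` Y = {}" by auto
  ultimately show ?thesis by (simp add: card_Un_disjoint card_image inj_on_def)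
qed

lemma card_differences_stacked_0:
  fixes X Y :: "'a::{ab_group_add,finite} set"
  assumes "z \<noteq> 0"
  shows "card {(u, v). u \<in> stacked X Y \<and> v \<in> stacked X Y \<and> u \<noteq> v \<and> u - v = (0, z)}
    = gr_coeff X X z + gr_coeff Y Y z"
proof -
  let ?A = "{(x, y). x \<in> X \<and> y \<in> X \<and> x - y = z}"
    and ?B = "{(x, y). x \<in> Y \<and> y \<in> Y \<and> x - y = z}"
  let ?f = "\<lambda>(x, y). ((0 :: 2, x), (0 :: 2, y))" and ?g = "\<lambda>(x, y). ((1 :: 2, x), (1 :: 2, y))"
  have "{(u, v). u \<in> stacked X Y \<and> v \<in> stacked X Y \<and> u \<noteq> v \<and> u - v = (0, z)}
      = ?f ` ?A \<union> ?g ` ?B"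
    using assms by (auto simp: stacked_def)
  moreover have "card (?f ` ?A) = card ?A" "card (?g ` ?B) = card ?B"
    by (auto intro!: card_image inj_onI)
  moreover have "?f ` ?A \<inter> ?g ` ?B = {}" by auto
  ultimately show ?thesis unfolding gr_coeff_def by (simp add: card_Un_disjoint)
qed

lemma card_differences_stacked_1:
  fixes X Y :: "'a::{ab_group_add,finite} set"
  shows "card {(u, v). u \<in> stacked X Y \<and> v \<in> stacked X Y \<and> u \<noteq> v \<and> u - v = (1, z)}
    = gr_coeff X Y z + gr_coeff Y X z"
proof -
  let ?A = "{(x, y). x \<in> X \<and> y \<in> Y \<and> x - y = z}"
    and ?B = "{(x, y). x \<in> Y \<and> y \<in> X \<and> x - y = z}"
  let ?f = "\<lambda>(x, y). ((0 :: 2, x), (1 :: 2, y))" and ?g = "\<lambda>(x, y). ((1 :: 2, x), (0 :: 2, y))"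
  have "{(u, v). u \<in> stacked X Y \<and> v \<in> stacked X Y \<and> u \<noteq> v \<and> u - v = (1, z)}
      = ?f ` ?A \<union> ?g ` ?B"
    by (auto simp: stacked_def)
  moreover have "card (?f ` ?A) = card ?A" "card (?g ` ?B) = card ?B"
    by (auto intro!: card_image inj_onI)
  moreover have "?f ` ?A \<inter> ?g ` ?B = {}" by auto
  ultimately show ?thesis unfolding gr_coeff_def by (simp add: card_Un_disjoint)
qed

lemma difference_family_stacked:
  fixes XYs :: "('a::{ab_group_add,finite} set \<times> 'a set) list"
  assumes "\<And>z. z \<noteq> 0 \<Longrightarrow> (\<Sum>(X, Y)\<leftarrow>XYs. gr_coeff X X z + gr_coeff Y Y z) = lam"
    and "\<And>z. (\<Sum>(X, Y)\<leftarrow>XYs. gr_coeff X Y z + gr_coeff Y X z) = lam"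
  shows "difference_family (map (\<lambda>(X, Y). stacked X Y) XYs) lam"
  unfolding difference_family_def
proof (intro allI impI)
  fix g :: "2 \<times> 'a" assume "g \<noteq> 0"
  obtain c z where g: "g = (c, z)" by (cases g)
  let ?count = "\<lambda>B. card {(u, v). u \<in> B \<and> v \<in> B \<and> u \<noteq> v \<and> u - v = g}"
  have "(\<Sum>B\<leftarrow>map (\<lambda>(X, Y). stacked X Y) XYs. ?count B)
      = (\<Sum>(X, Y)\<leftarrow>XYs. ?count (stacked X Y))"
    by (simp add: comp_def split_def)
  also have "\<dots> = lam"
  proof (cases "c = 0")
    case True
    hence "z \<noteq> 0" using \<open>g \<noteq> 0\<close> g by (simp add: zero_prod_def)
    thus ?thesis using assms(1) by (simp add: g True card_differences_stacked_0)
  next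
    case False
    hence "c = 1" using two_cases by blast
    thus ?thesis using assms(2) by (simp add: g card_differences_stacked_1)
  qed
  finally show "(\<Sum>B\<leftarrow>map (\<lambda>(X, Y). stacked X Y) XYs. ?count B) = lam" .
qed

lemma difference_family_params_map_card:
  fixes Bs :: "'a::{ab_group_add,finite} set list"
  assumes "difference_family Bs lam"
  shows "difference_family_params Bs CARD('a) (map card Bs) lam"
  using assms by (simp add: difference_family_params_def)

text \<open>
  The counting in Z_2 \<times> G uses only the following data, available in any finite abelian group G
  of order q^2: D_0 and D_2 = G - {0} - D_0 are partial difference sets of Paley type, and the
  E_i are as in the theorem.
\<close>

locale type_H_doubling =
  fixes q :: nat and D0 D2 E0 E1 E2 E3 :: "'a::{ab_group_add,finite} set" and lam :: nat
  assumes card_group: "CARD('a) = q ^ 2"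
    and zero_notin_D0: "0 \<notin> D0"
    and D2_eq: "D2 = - insert 0 D0"
    and card_D0: "2 * card D0 = q ^ 2 - 1"
    and D0_differences: "z \<noteq> 0 \<Longrightarrow> 4 * gr_coeff D0 D0 z + (if z \<in> D0 then 5 else 1) = q ^ 2"
    and D2_differences: "z \<noteq> 0 \<Longrightarrow> 4 * gr_coeff D2 D2 z + (if z \<in> D2 then 5 else 1) = q ^ 2"
    and card_E: "card E0 = (q ^ 2 - q) div 2" "card E1 = (q ^ 2 - q) div 2"
      "card E2 = (q ^ 2 - q) div 2" "card E3 = (q ^ 2 - q) div 2"
    and E_family: "difference_family [E0, E1, E2, E3] lam"
    and E_type_H: "type_H [E0, E1, E2, E3] lam"
    and E_cross: "int (gr_coeff E0 E1 z + gr_coeff E1 E0 z + gr_coeff E2 E3 z + gr_coeff E3 E2 z)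
      = (int q - 1) ^ 2 + 2 * (if z \<in> D0 then 1 else 0) - 2 * (if z \<in> D2 then 1 else 0)"
begin

definition blocks :: "('a set \<times> 'a set) list" where
  "blocks = [(D0, - D0), (D2, D2), (E0, - E1), (E2, - E3)]"

lemma q_pos: "q > 0"
  using card_group by (cases q) auto

lemma int_card_D: "2 * int (card D0) = int q ^ 2 - 1" "2 * int (card D2) = int q ^ 2 - 1"
proof -
  have "card D2 = q ^ 2 - card (insert 0 D0)" by (simp add: D2_eq card_Compl card_group)
  also have "\<dots> = card D0" using card_D0 zero_notin_D0 by simp
  finally have D2: "card D2 = card D0" .
  from card_D0 have "int (2 * card D0) = int (q ^ 2 - 1)" by (rule arg_cong)
  also have "\<dots> = int q ^ 2 - 1" using q_pos by (simp add: of_nat_diff)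
  finally show "2 * int (card D0) = int q ^ 2 - 1" "2 * int (card D2) = int q ^ 2 - 1"
    by (simp_all add: D2)
qed

lemma int_card_E:
  "2 * int (card E0) = int q ^ 2 - int q" "2 * int (card E1) = int q ^ 2 - int q"
  "2 * int (card E2) = int q ^ 2 - int q" "2 * int (card E3) = int q ^ 2 - int q"
proof -
  have "even (q ^ 2 - q)" by (simp add: power2_eq_square flip: diff_mult_distrib)
  hence "2 * ((q ^ 2 - q) div 2) = q ^ 2 - q" by simp
  hence "2 * int ((q ^ 2 - q) div 2) = int (q ^ 2 - q)" by linarith
  also have "\<dots> = int q ^ 2 - int q" by (simp add: of_nat_diff power2_eq_square)
  finally show "2 * int (card E0) = int q ^ 2 - int q" "2 * int (card E1) = int q ^ 2 - int q"
    "2 * int (card E2) = int q ^ 2 - int q" "2 * int (card E3) = int q ^ 2 - int q"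
    by (simp_all add: card_E)
qed

lemma int_lam: "int lam = int q ^ 2 - 2 * int q"
  using E_type_H int_card_E card_group by (simp add: type_H_def)

lemma int_D_differences:
  assumes "z \<noteq> 0" and "D \<in> {D0, D2}"
  shows "4 * int (gr_coeff D D z) + (if z \<in> D then 5 else 1) = int q ^ 2"
proof -
  have "4 * gr_coeff D D z + (if z \<in> D then 5 else 1) = q ^ 2"
    using assms D0_differences[OF assms(1)] D2_differences[OF assms(1)] by auto
  hence "int (4 * gr_coeff D D z + (if z \<in> D then 5 else 1)) = int (q ^ 2)" by (rule arg_cong)
  thus ?thesis by (simp split: if_splits)
qed

lemma D_differences_sum:
  assumes "z \<noteq> 0"
  shows "2 * (int (gr_coeff D0 D0 z) + int (gr_coeff D2 D2 z)) = int q ^ 2 - 3"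
  using int_D_differences[OF assms, of D0] int_D_differences[OF assms, of D2] D2_eq assms
  by (auto split: if_splits)

lemma D_differences_gap:
  "int (gr_coeff D2 D2 z) - int (gr_coeff D0 D0 z) = (if z \<in> D0 then 1 else 0) - (if z \<in> D2 then 1 else 0)"
proof (cases "z = 0")
  case True
  thus ?thesis using int_card_D zero_notin_D0 D2_eq by (simp add: gr_coeff_self_zero)
next
  case False
  thus ?thesis using int_D_differences[OF False, of D0] int_D_differences[OF False, of D2] D2_eq
    by (auto split: if_splits)
qed

lemma int_two_q_squared_minus_2: "int (2 * q ^ 2 - 2) = 2 * int q ^ 2 - 2"
  using q_pos by (simp add: of_nat_diff)

lemma blocks_pure_differences:
  assumes "z \<noteq> 0"
  shows "(\<Sum>(X, Y)\<leftarrow>blocks. gr_coeff X X z + gr_coeff Y Y z) = 2 * q ^ 2 - 2"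
proof -
  have "(\<Sum>B\<leftarrow>[E0, E1, E2, E3].
      card {(x, y). x \<in> B \<and> y \<in> B \<and> x \<noteq> y \<and> x - y = z}) = lam"
    using E_family assms unfolding difference_family_def by blast
  hence E: "gr_coeff E0 E0 z + gr_coeff E1 E1 z + gr_coeff E2 E2 z + gr_coeff E3 E3 z = lam"
    by (simp add: card_nonzero_differences[OF assms] add.assoc)
  have "int (\<Sum>(X, Y)\<leftarrow>blocks. gr_coeff X X z + gr_coeff Y Y z) = 2 * int q ^ 2 - 2"
    using D_differences_sum[OF assms] E int_lam int_card_D int_card_E card_group
      gr_coeff_Compl_Compl[of D0 z] gr_coeff_Compl_Compl[of E1 z] gr_coeff_Compl_Compl[of E3 z]
    unfolding blocks_def by simp
  thus ?thesis unfolding int_two_q_squared_minus_2 [symmetric] by (simp only: of_nat_eq_iff)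
qed

lemma blocks_mixed_differences:
  "(\<Sum>(X, Y)\<leftarrow>blocks. gr_coeff X Y z + gr_coeff Y X z) = 2 * q ^ 2 - 2"
proof -
  have "int (\<Sum>(X, Y)\<leftarrow>blocks. gr_coeff X Y z + gr_coeff Y X z) = 2 * int q ^ 2 - 2"
    using D_differences_gap[of z] E_cross[of z] int_card_D int_card_E
      gr_coeff_Compl_left[of D0 D0 z] gr_coeff_Compl_right[of D0 D0 z]
      gr_coeff_Compl_left[of E1 E0 z] gr_coeff_Compl_right[of E0 E1 z]
      gr_coeff_Compl_left[of E3 E2 z] gr_coeff_Compl_right[of E2 E3 z]
    unfolding blocks_def by (simp add: power2_eq_square algebra_simps)
  thus ?thesis unfolding int_two_q_squared_minus_2 [symmetric] by (simp only: of_nat_eq_iff)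
qed

lemma difference_family_blocks: "difference_family (map (\<lambda>(X, Y). stacked X Y) blocks) (2 * q ^ 2 - 2)"
  by (rule difference_family_stacked) (use blocks_pure_differences blocks_mixed_differences in auto)

lemma card_blocks: "map (\<lambda>(X, Y). card (stacked X Y)) blocks = [q ^ 2, q ^ 2 - 1, q ^ 2, q ^ 2]"
proof -
  have "(q ^ 2 - q) div 2 \<le> q ^ 2" by (meson diff_le_self div_le_dividend order_trans)
  moreover have "card D0 \<le> q ^ 2" using card_D0 by linarith
  moreover have "card D2 = card D0" using int_card_D by simp
  ultimately show ?thesis
    using card_D0 card_E by (simp add: blocks_def card_stacked card_Compl card_group)
qed

end

theorem proposition2p3:
  fixes w :: "'a::{field,finite}" and q :: nat
    and E0 E1 E2 E3 :: "'a set"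
  assumes "prime_power q" and "q mod 4 = 3"
    and "CARD('a) = q ^ 2"
    and "primitive_elem w"
    and "card E0 = (q^2 - q) div 2" and "card E1 = (q^2 - q) div 2"
    and "card E2 = (q^2 - q) div 2" and "card E3 = (q^2 - q) div 2"
    and "\<exists>lam. difference_family [E0, E1, E2, E3] lam \<and> type_H [E0, E1, E2, E3] lam"
    and "\<forall>g. int (gr_coeff E0 E1 g + gr_coeff E1 E0 g + gr_coeff E2 E3 g + gr_coeff E3 E2 g)
            = (int q - 1)^2 + 2 * (if g \<in> Dset w 0 then 1 else 0)
                             - 2 * (if g \<in> Dset w 2 then 1 else 0)"
  shows "difference_family_params
     [{(0::2, x) | x. x \<in> Dset w 0} \<union> {(1::2, x) | x. x \<notin> Dset w 0},
      {(0::2, x) | x. x \<in> Dset w 2} \<union> {(1::2, x) | x. x \<in> Dset w 2},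
      {(0::2, x) | x. x \<in> E0} \<union> {(1::2, x) | x. x \<notin> E1},
      {(0::2, x) | x. x \<in> E2} \<union> {(1::2, x) | x. x \<notin> E3}]
     (2 * q^2) [q^2, q^2 - 1, q^2, q^2] (2 * q^2 - 2)"
proof -
  interpret primitive_quadratic_field w q using assms(1,3,4) by unfold_locales
  note four = four_dvd_card_minus_one[OF assms(2)]
  obtain lam where "difference_family [E0, E1, E2, E3] lam" "type_H [E0, E1, E2, E3] lam"
    using assms(9) by blast
  interpret type_H_doubling q "Dset w 0" "Dset w 2" E0 E1 E2 E3 lam
  proof
    fix z :: 'a assume "z \<noteq> 0"
    thus "4 * gr_coeff (Dset w 0) (Dset w 0) z + (if z \<in> Dset w 0 then 5 else 1) = q ^ 2"
      "4 * gr_coeff (Dset w 2) (Dset w 2) z + (if z \<in> Dset w 2 then 5 else 1) = q ^ 2"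
      using half_cone_difference_count cone_Dset[OF assms(2)] card_Dset[OF primitive four] assms(3)
      by auto
  qed (use assms zero_notin_Dset[OF primitive four] Dset_2_eq[OF primitive four]
         card_Dset[OF primitive four] \<open>difference_family _ lam\<close> \<open>type_H _ lam\<close> in auto)
  have "difference_family_params (map (\<lambda>(X, Y). stacked X Y) blocks)
      (2 * q^2) [q^2, q^2 - 1, q^2, q^2] (2 * q^2 - 2)"
    using difference_family_params_map_card[OF difference_family_blocks] card_blocks assms(3)
    by (simp add: comp_def split_def)
  thus ?thesis by (simp add: blocks_def stacked_def)
qed

end
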